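(* The Chebyshev polynomials satisfy: (1) $\sum_{r=0}^sJ_{r,-1/2}=J_{s,1/2}$ for all $s\ge0$; (2) $\sum_{r=0}^{s-1}2J_{r,1/2}(x)=\frac{J_{s,-1/2}(x)-1}{x-1}$ for all $s\ge1$; (3) for every $T\in C^1[-1,1]$ and $s\ge0$, $\sum_{r=s+1}^\infty\langle J_{r,-1/2},T\rangle_{-1/2}=\langle J_{s,1/2},T(1)-T\rangle_{-1/2}$; (4) for every $T\in C^1[-1,1]$ and $s\ge0$, $\sum_{r=s}^\infty\langle J_{r,1/2},T\rangle_{1/2}=\langle J_{s,-1/2},T\rangle_{-1/2}$.
   Context: $J_{k,1/2}$ and $J_{k,-1/2}$ ($k\ge0$) are defined by $J_{0,1/2}=1$, $J_{1,1/2}(x)=2x$, $J_{0,-1/2}=1$, $J_{1,-1/2}(x)=2x-1$, both satisfying $xp_k(x)=\frac12p_{k+1}(x)+\frac12p_{k-1}(x)$ for $k\ge1$ (Chebyshev polynomials of the second and third kind). For $\alpha\in\{\pm1/2\}$, $\langle f,g\rangle_\alpha=\frac{2^{\alpha+1/2}}{\pi}\int_{-1}^1f(x)g(x)(1-x)^\alpha(1+x)^{1/2}dx$. *)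

theory Defs
  imports "HOL-Analysis.Analysis"
begin

text \<open>Chebyshev polynomials J_{k,1/2} (second kind), as real functions.\<close>
fun Jp :: "nat \<Rightarrow> real \<Rightarrow> real" where
  "Jp 0 x = 1"
| "Jp (Suc 0) x = 2 * x"
| "Jp (Suc (Suc k)) x = 2 * x * Jp (Suc k) x - Jp k x"

text \<open>Chebyshev polynomials J_{k,-1/2} (third kind), as real functions.\<close>
fun Jm :: "nat \<Rightarrow> real \<Rightarrow> real" where
  "Jm 0 x = 1"
| "Jm (Suc 0) x = 2 * x - 1"
| "Jm (Suc (Suc k)) x = 2 * x * Jm (Suc k) x - Jm k x"

text \<open>The weighted inner product for alpha = 1/2 or -1/2.\<close>
definition ip :: "real \<Rightarrow> (real \<Rightarrow> real) \<Rightarrow> (real \<Rightarrow> real) \<Rightarrow> real" where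
  "ip \<alpha> f g = 2 powr (\<alpha> + 1/2) / pi *
     integral {-1..1} (\<lambda>x. f x * g x * (1 - x) powr \<alpha> * (1 + x) powr (1/2))"

definition C1_on_interval :: "(real \<Rightarrow> real) \<Rightarrow> bool" where
  "C1_on_interval T \<longleftrightarrow> (\<exists>T'. continuous_on {-1..1} T' \<and>
     (\<forall>x\<in>{-1..1}. (T has_real_derivative T' x) (at x within {-1..1})))"

end

theory Submission
  imports Defs
begin

text \<open>Under the substitution \<open>x = - cos t\<close> the weight of \<open>ip (-1/2)\<close> becomes \<open>1 - cos t\<close>, and the
  three-term recurrence turns \<open>Jp n (- cos t) * sin t\<close> and \<open>Jm n (- cos t) * (1 - cos t)\<close> into
  (differences of) single Fourier modes. Parts (1) and (2) telescope by
  \<open>Jm (Suc n) = Jp (Suc n) - Jp n\<close> and \<open>Jm (Suc n) - Jm n = 2 (x - 1) Jp n\<close>, and the same identities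
  make the series (3) and (4) telescope. Their tails are \<open>ip (-1/2) (Jm m) T\<close> and, since
  \<open>ip (-1/2) (Jp m) 1 = 1\<close>, \<open>ip (-1/2) (Jp m) (T 1 - T)\<close>. In the variable \<open>t\<close> these are Fourier
  coefficients of the \<open>C\<^sup>1\<close> functions \<open>T (- cos t)\<close> and \<open>sin t (T 1 - T (- cos t)) / (1 + cos t)\<close>
  on \<open>[0, pi]\<close>, which tend to \<open>0\<close> by integration by parts.\<close>

section \<open>Algebraic identities\<close>

lemma Jm_Suc_eq_Jp_diff: "Jm (Suc n) x = Jp (Suc n) x - Jp n x"
proof (induction n rule: induct_nat_012)
  case (ge2 n)
  show ?case
    unfolding Jm.simps(3)[of "Suc n"] ge2 by (simp add: algebra_simps)
qed (simp_all add: algebra_simps)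

lemma sum_Jm_eq_Jp: "(\<Sum>r\<le>s. Jm r x) = Jp s x"
  by (induction s) (simp_all add: Jm_Suc_eq_Jp_diff)

lemma Jm_Suc_eq_Jm_add: "Jm (Suc n) x = Jm n x + 2 * (x - 1) * Jp n x"
proof (cases n)
  case (Suc k)
  show ?thesis
    unfolding Suc Jm_Suc_eq_Jp_diff by (simp add: algebra_simps)
qed (simp add: algebra_simps)

lemma sum_Jp_mult_eq: "(x - 1) * (\<Sum>r<s. 2 * Jp r x) = Jm s x - 1"
proof (induction s)
  case (Suc s)
  then show ?case
    by (simp add: Jm_Suc_eq_Jm_add distrib_left del: Jm.simps)
qed simp

lemma sum_Jp_eq_divide: "x \<noteq> 1 \<Longrightarrow> (\<Sum>r<s. 2 * Jp r x) = (Jm s x - 1) / (x - 1)"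
  using sum_Jp_mult_eq[of x s] by (simp add: field_simps)

lemma continuous_on_Jp [continuous_intros]:
  "continuous_on S f \<Longrightarrow> continuous_on S (\<lambda>x. Jp n (f x))"
  by (induction n rule: induct_nat_012) (auto intro!: continuous_intros)

lemma continuous_on_Jm [continuous_intros]:
  "continuous_on S f \<Longrightarrow> continuous_on S (\<lambda>x. Jm n (f x))"
  by (induction n rule: induct_nat_012) (auto intro!: continuous_intros)

section \<open>The substitution \<open>x = - cos t\<close>\<close>

lemma Jp_neg_cos_mult_sin: "Jp n (- cos t) * sin t = (-1) ^ n * sin ((real n + 1) * t)"
proof (induction n rule: induct_nat_012)
  case (ge2 n)
  have "Jp (Suc (Suc n)) (- cos t) * sin t
      = - 2 * cos t * (Jp (Suc n) (- cos t) * sin t) - Jp n (- cos t) * sin t"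
    by (simp add: algebra_simps)
  also have "\<dots> = (-1) ^ n * (2 * cos t * sin ((real n + 2) * t) - sin ((real n + 1) * t))"
    unfolding ge2 by (simp add: algebra_simps)
  also have "2 * cos t * sin ((real n + 2) * t) = sin ((real n + 3) * t) + sin ((real n + 1) * t)"
    using sin_add[of "(real n + 2) * t" t] sin_diff[of "(real n + 2) * t" t] by (simp add: algebra_simps)
  finally show ?case
    by (simp add: algebra_simps)
qed (simp_all add: sin_double)

lemma one_plus_cos_mult_one_minus_cos: "(1 + cos t) * (1 - cos t) = sin t * sin (t :: real)"
  using sin_cos_squared_add3[of t] by (simp add: algebra_simps)

lemma Jp_neg_cos_mult_sin_sq:
  "Jp n (- cos t) * ((1 + cos t) * (1 - cos t)) = (-1) ^ n * sin ((real n + 1) * t) * sin t"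
  by (simp add: one_plus_cos_mult_one_minus_cos Jp_neg_cos_mult_sin flip: mult.assoc)

lemma Jm_neg_cos_mult: "Jm n (- cos t) * (1 - cos t) = (-1) ^ n * (cos (real n * t) - cos ((real n + 1) * t))"
proof (induction n rule: induct_nat_012)
  case (ge2 n)
  have "Jm (Suc (Suc n)) (- cos t) * (1 - cos t)
      = - 2 * cos t * (Jm (Suc n) (- cos t) * (1 - cos t)) - Jm n (- cos t) * (1 - cos t)"
    by (simp add: algebra_simps)
  also have "\<dots> = (-1) ^ n * ((2 * cos t * cos ((real n + 1) * t) - cos (real n * t))
      - (2 * cos t * cos ((real n + 2) * t) - cos ((real n + 1) * t)))"
    unfolding ge2 by (simp add: algebra_simps)
  also have "2 * cos t * cos ((real n + 2) * t) = cos ((real n + 3) * t) + cos ((real n + 1) * t)"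
    using cos_add[of "(real n + 2) * t" t] cos_diff[of "(real n + 2) * t" t] by (simp add: algebra_simps)
  also have "2 * cos t * cos ((real n + 1) * t) = cos ((real n + 2) * t) + cos (real n * t)"
    using cos_add[of "(real n + 1) * t" t] cos_diff[of "(real n + 1) * t" t] by (simp add: algebra_simps)
  finally show ?case
    by (simp add: algebra_simps)
qed (simp_all add: cos_double_cos[of t, unfolded mult.commute[of 2 t]] power2_eq_square algebra_simps)

lemma neg_cos_image_subset: "(\<lambda>t::real. - cos t) ` S \<subseteq> {-1..1}"
  by auto

lemma neg_cos_in_open_interval: "t \<in> {0<..<pi} \<Longrightarrow> - cos t \<in> {-1<..<1}"
  using cos_monotone_0_pi[of 0 t] cos_monotone_0_pi[of t pi] by auto

section \<open>A Riemann--Lebesgue lemma\<close>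

lemma integral_mult_sin_by_parts:
  fixes k k' :: "real \<Rightarrow> real"
  assumes k: "continuous_on {a..b} k" and k': "continuous_on {a..b} k'"
    and deriv: "\<And>t. t \<in> {a<..<b} \<Longrightarrow> (k has_real_derivative k' t) (at t)"
    and "a \<le> b"
  shows "\<omega> * integral {a..b} (\<lambda>t. k t * sin (\<omega> * t + c))
    = k a * cos (\<omega> * a + c) - k b * cos (\<omega> * b + c) + integral {a..b} (\<lambda>t. k' t * cos (\<omega> * t + c))"
proof -
  define F where "F t = - k t * cos (\<omega> * t + c)" for t
  have "((\<lambda>t. \<omega> * (k t * sin (\<omega> * t + c)) - k' t * cos (\<omega> * t + c)) has_integral F b - F a) {a..b}"
  proof (rule fundamental_theorem_of_calculus_interior[OF \<open>a \<le> b\<close>])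
    show "continuous_on {a..b} F"
      unfolding F_def by (intro continuous_intros k)
    show "(F has_vector_derivative \<omega> * (k t * sin (\<omega> * t + c)) - k' t * cos (\<omega> * t + c)) (at t)"
      if "t \<in> {a<..<b}" for t
      unfolding F_def has_real_derivative_iff_has_vector_derivative[symmetric]
      by (auto intro!: derivative_eq_intros deriv[OF that] simp: algebra_simps)
  qed
  then have "\<omega> * integral {a..b} (\<lambda>t. k t * sin (\<omega> * t + c))
      - integral {a..b} (\<lambda>t. k' t * cos (\<omega> * t + c)) = F b - F a"
    by (subst integral_mult_right[symmetric], subst integral_diff[symmetric])
      (auto intro!: integrable_continuous_interval continuous_intros k k' integral_unique)
  then show ?thesis
    by (simp add: F_def algebra_simps)
qed

lemma abs_mult_cos_le: "\<bar>x * cos y\<bar> \<le> \<bar>x :: real\<bar>"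
  using mult_left_le[OF abs_cos_le_one abs_ge_zero] by (simp add: abs_mult)

lemma integral_mult_sin_tendsto_0:
  fixes k k' :: "real \<Rightarrow> real"
  assumes k: "continuous_on {a..b} k" and k': "continuous_on {a..b} k'"
    and deriv: "\<And>t. t \<in> {a<..<b} \<Longrightarrow> (k has_real_derivative k' t) (at t)"
  shows "(\<lambda>m. integral {a..b} (\<lambda>t. k t * sin (real m * t + c))) \<longlonglongrightarrow> 0"
proof (cases "a \<le> b")
  case True
  obtain B where B: "\<And>t. t \<in> {a..b} \<Longrightarrow> \<bar>k t\<bar> \<le> B"
    using continuous_on_compact_bound[OF compact_Icc k] by auto
  obtain M where M: "\<And>t. t \<in> {a..b} \<Longrightarrow> \<bar>k' t\<bar> \<le> M"
    using continuous_on_compact_bound[OF compact_Icc k'] by auto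
  have "\<bar>integral {a..b} (\<lambda>t. k t * sin (real m * t + c))\<bar> \<le> (2 * B + M * (b - a)) / real m"
    if "m \<ge> 1" for m
  proof -
    have "\<bar>k a * cos (real m * a + c) - k b * cos (real m * b + c)\<bar> \<le> 2 * B"
      using B[of a] B[of b] True abs_mult_cos_le[of "k a" "real m * a + c"]
        abs_mult_cos_le[of "k b" "real m * b + c"] abs_triangle_ineq4 by fastforce
    moreover have "\<bar>integral {a..b} (\<lambda>t. k' t * cos (real m * t + c))\<bar> \<le> M * (b - a)"
    proof -
      have "\<bar>k' t * cos (real m * t + c)\<bar> \<le> M" if "t \<in> {a..b}" for t
        using M[OF that] abs_mult_cos_le[of "k' t" "real m * t + c"] by linarith
      moreover have "continuous_on {a..b} (\<lambda>t. k' t * cos (real m * t + c))"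
        by (intro continuous_intros k')
      ultimately show ?thesis
        using integral_bound[OF True, of "\<lambda>t. k' t * cos (real m * t + c)" M] by simp
    qed
    ultimately have "\<bar>real m * integral {a..b} (\<lambda>t. k t * sin (real m * t + c))\<bar> \<le> 2 * B + M * (b - a)"
      using integral_mult_sin_by_parts[OF k k' deriv True, of "real m" c] by linarith
    then show ?thesis
      using \<open>m \<ge> 1\<close> by (simp add: abs_mult pos_le_divide_eq mult.commute)
  qed
  then show ?thesis
    by (intro Lim_null_comparison[OF _ lim_const_over_n, of _ "2 * B + M * (b - a)"])
      (auto simp: eventually_sequentially)
qed simp

section \<open>The inner products\<close>

text \<open>The substitution is \<open>t = arccos (- x)\<close>; its derivative \<open>1 / sqrt (1 - x\<^sup>2)\<close> blows up only at
  the endpoints, which the substitution rule tolerates as a finite exceptional set.\<close>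

lemma has_integral_minus_half_weight:
  fixes \<phi> :: "real \<Rightarrow> real"
  assumes \<phi>: "continuous_on {-1..1} \<phi>"
  shows "((\<lambda>x. \<phi> x * (1 - x) powr (-1/2) * (1 + x) powr (1/2))
      has_integral integral {0..pi} (\<lambda>t. \<phi> (- cos t) * (1 - cos t))) {-1..1}"
proof -
  let ?f = "\<lambda>t. \<phi> (- cos t) * (1 - cos t)"
  have "((\<lambda>x. (1 / sqrt (1 - x\<^sup>2)) *\<^sub>R ?f (arccos (- x)))
      has_integral integral {arccos (- (-1))..arccos (- 1)} ?f) {-1..1}"
  proof (rule has_integral_substitution_strong[where s = "{-1, 1}" and c = 0 and d = pi])
    show "(\<lambda>x. arccos (- x)) ` {-1..1} \<subseteq> {0..pi}"
      using arccos_bounded by auto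
    show "continuous_on {0..pi} ?f"
      by (intro continuous_intros continuous_on_compose2[OF \<phi>]) auto
    show "continuous_on {-1..1} (\<lambda>x. arccos (- x))"
      by (intro continuous_intros) auto
    show "((\<lambda>x. arccos (- x)) has_real_derivative 1 / sqrt (1 - x\<^sup>2)) (at x within {-1..1})"
      if "x \<in> {-1..1} - {-1, 1}" for x
      using that by (auto intro!: derivative_eq_intros DERIV_arccos[THEN DERIV_chain2]
        simp: divide_inverse)
  qed auto
  then have subst: "((\<lambda>x. (1 / sqrt (1 - x\<^sup>2)) *\<^sub>R ?f (arccos (- x)))
      has_integral integral {0..pi} ?f) {-1..1}"
    by simp
  have "(1 / sqrt (1 - x\<^sup>2)) *\<^sub>R ?f (arccos (- x))
      = \<phi> x * (1 - x) powr (-1/2) * (1 + x) powr (1/2)" if "x \<in> {-1..1} - {-1, 1}" for x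
  proof -
    have "sqrt (1 - x\<^sup>2) = sqrt (1 - x) * sqrt (1 + x)"
      by (simp add: power2_eq_square algebra_simps flip: real_sqrt_mult)
    then show ?thesis
      using that by (simp add: powr_minus_divide powr_half_sqrt field_simps)
  qed
  then show ?thesis
    by (intro has_integral_spike_finite[OF _ _ subst, of "{-1, 1}"]) auto
qed

lemma integral_cos_nat_mult: "integral {0..pi} (\<lambda>t. cos (real k * t)) = (if k = 0 then pi else 0)"
proof (cases "k = 0")
  case False
  have "((\<lambda>t. cos (real k * t)) has_integral sin (real k * pi) / real k - sin (real k * 0) / real k) {0..pi}"
  proof (rule fundamental_theorem_of_calculus_interior)
    show "((\<lambda>t. sin (real k * t) / real k) has_vector_derivative cos (real k * t)) (at t)" for t
      unfolding has_real_derivative_iff_has_vector_derivative[symmetric]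
      using False by (auto intro!: derivative_eq_intros)
  qed (use False in \<open>auto intro!: continuous_intros\<close>)
  with False show ?thesis
    by (simp add: integral_unique sin_npi mult.commute[of _ pi])
qed simp

lemma integral_Jm_neg_cos: "integral {0..pi} (\<lambda>t. Jm n (- cos t) * (1 - cos t)) = (if n = 0 then pi else 0)"
proof -
  have "integral {0..pi} (\<lambda>t. Jm n (- cos t) * (1 - cos t))
      = (-1) ^ n * (integral {0..pi} (\<lambda>t. cos (real n * t)) - integral {0..pi} (\<lambda>t. cos (real (Suc n) * t)))"
    unfolding Jm_neg_cos_mult
    by (subst integral_mult_right, subst integral_diff)
      (auto intro!: integrable_continuous_interval continuous_intros simp: add.commute)
  then show ?thesis
    by (simp add: integral_cos_nat_mult del: of_nat_Suc)
qed

lemma ip_minus_half_eq_integral_neg_cos: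
  assumes "continuous_on {-1..1} (\<lambda>x. f x * g x)"
  shows "ip (-1/2) f g = integral {0..pi} (\<lambda>t. f (- cos t) * g (- cos t) * (1 - cos t)) / pi"
  using integral_unique[OF has_integral_minus_half_weight[OF assms]] by (simp add: ip_def)

lemma ip_minus_half_diff:
  assumes "continuous_on {-1..1} (\<lambda>x. f\<^sub>1 x * g\<^sub>1 x)" "continuous_on {-1..1} (\<lambda>x. f\<^sub>2 x * g\<^sub>2 x)"
    and "\<And>x. f x * g x = f\<^sub>1 x * g\<^sub>1 x - f\<^sub>2 x * g\<^sub>2 x"
  shows "ip (-1/2) f g = ip (-1/2) f\<^sub>1 g\<^sub>1 - ip (-1/2) f\<^sub>2 g\<^sub>2"
proof -
  let ?w = "\<lambda>x::real. (1 - x) powr (-1/2) * (1 + x) powr (1/2)"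
  have "integral {-1..1} (\<lambda>x. f x * g x * ?w x)
      = integral {-1..1} (\<lambda>x. f\<^sub>1 x * g\<^sub>1 x * ?w x) - integral {-1..1} (\<lambda>x. f\<^sub>2 x * g\<^sub>2 x * ?w x)"
    using has_integral_minus_half_weight[OF assms(1)] has_integral_minus_half_weight[OF assms(2)]
    by (subst integral_diff[symmetric]) (auto simp: assms(3) left_diff_distrib mult.assoc)
  then show ?thesis
    by (simp add: ip_def mult.assoc diff_divide_distrib)
qed

lemma ip_half_eq_ip_minus_half: "ip (1/2) f g = ip (-1/2) (\<lambda>x. 2 * (1 - x) * f x) g"
proof -
  have sqrt: "(1 - x) powr (1/2) = (1 - x) * (1 - x) powr (-1/2)" if "x \<in> {-1..1}" for x :: real
    \<comment> \<open>at \<open>x = 1\<close> both sides are \<open>0\<close>, because \<open>0 powr a = 0\<close>\<close>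
    using that powr_add[of "1 - x" 1 "-1/2"] by (cases "x = 1") auto
  have "integral {-1..1} (\<lambda>x. 2 * (1 - x) * f x * g x * (1 - x) powr (-1/2) * (1 + x) powr (1/2))
      = integral {-1..1} (\<lambda>x. 2 * (f x * g x * (1 - x) powr (1/2) * (1 + x) powr (1/2)))"
    by (intro integral_cong) (simp only: sqrt mult_ac)
  then show ?thesis
    by (simp add: ip_def)
qed

lemma ip_Jp_const: "ip (-1/2) (Jp m) (\<lambda>_. c) = c"
proof -
  have "ip (-1/2) (Jp m) (\<lambda>_. c) = integral {0..pi} (\<lambda>t. c * (Jp m (- cos t) * (1 - cos t))) / pi"
    by (subst ip_minus_half_eq_integral_neg_cos) (auto intro!: continuous_intros simp: mult_ac)
  also have "\<dots> = c * integral {0..pi} (\<lambda>t. Jp m (- cos t) * (1 - cos t)) / pi"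
    by simp
  also have "integral {0..pi} (\<lambda>t. Jp m (- cos t) * (1 - cos t))
      = (\<Sum>r\<le>m. integral {0..pi} (\<lambda>t. Jm r (- cos t) * (1 - cos t)))"
    unfolding sum_Jm_eq_Jp[symmetric] sum_distrib_right
    by (rule integral_sum) (auto intro!: integrable_continuous_interval continuous_intros)
  finally show ?thesis
    by (simp add: integral_Jm_neg_cos)
qed

lemma continuous_on_slope_to_endpoint:
  fixes f :: "real \<Rightarrow> real"
  assumes f: "continuous_on {a..b} f" and D: "(f has_real_derivative D) (at b within {a..b})"
  shows "continuous_on {a..b} (\<lambda>x. if x = b then D else (f b - f x) / (b - x))"
  unfolding continuous_on_eq_continuous_within
proof
  fix x assume x: "x \<in> {a..b}"
  let ?q = "\<lambda>x. if x = b then D else (f b - f x) / (b - x)"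
  show "continuous (at x within {a..b}) ?q"
  proof (cases "x = b")
    case True
    have "((\<lambda>y. (f y - f b) / (y - b)) \<longlongrightarrow> D) (at b within {a..b})"
      using D by (simp add: has_field_derivative_iff)
    moreover have "(f y - f b) / (y - b) = ?q y" if "y \<noteq> b" for y
      using that by (metis minus_diff_eq minus_divide_divide)
    ultimately have "(?q \<longlongrightarrow> D) (at b within {a..b})"
      by (rule Lim_transform_within[OF _ zero_less_one]) simp
    then show ?thesis
      using True by (simp add: continuous_within)
  next
    case False
    have "continuous (at x within {a..b}) (\<lambda>y. (f b - f y) / (b - y))"
      using f x False by (intro continuous_intros) (auto simp: continuous_on_eq_continuous_within)
    moreover have "dist x b > 0"
      using False by simp
    ultimately show ?thesis
      by (rule continuous_transform_within[OF _ _ x]) (auto simp: dist_commute)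
  qed
qed

lemma has_real_derivative_slope_to_endpoint:
  fixes f :: "real \<Rightarrow> real"
  assumes "(f has_real_derivative D) (at x)" "x \<noteq> b"
  shows "((\<lambda>y. if y = b then E else (f b - f y) / (b - y))
      has_real_derivative ((f b - f x) / (b - x) - D) / (b - x)) (at x)"
proof (rule has_field_derivative_transform_within_open[where S = "- {b}"])
  show "((\<lambda>y. (f b - f y) / (b - y)) has_real_derivative ((f b - f x) / (b - x) - D) / (b - x)) (at x)"
    using assms by (auto intro!: derivative_eq_intros simp: field_simps power2_eq_square)
qed (use assms in auto)

lemma has_real_derivative_sin_mult_neg_cos:
  assumes q: "(q has_real_derivative (q (- cos t) - D) / (1 + cos t)) (at (- cos t))"
    and "cos t \<noteq> -1"
  shows "((\<lambda>t. sin t * q (- cos t)) has_real_derivative q (- cos t) - D * (1 - cos t)) (at t)"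
proof -
  have "((\<lambda>t. sin t * q (- cos t)) has_real_derivative
      cos t * q (- cos t) + sin t * ((q (- cos t) - D) / (1 + cos t) * sin t)) (at t)"
    by (auto intro!: derivative_eq_intros DERIV_chain2[where g = "\<lambda>t. - cos t", OF q])
  moreover have "cos t * q (- cos t) + sin t * ((q (- cos t) - D) / (1 + cos t) * sin t)
      = q (- cos t) - D * (1 - cos t)"
  proof -
    have "1 + cos t \<noteq> 0"
      using \<open>cos t \<noteq> -1\<close> by linarith
    have "sin t * ((q (- cos t) - D) / (1 + cos t) * sin t)
        = (q (- cos t) - D) * (sin t * sin t) / (1 + cos t)"
      by (simp add: mult_ac)
    also have "\<dots> = (q (- cos t) - D) * (1 - cos t)"
      using \<open>1 + cos t \<noteq> 0\<close> by (simp flip: one_plus_cos_mult_one_minus_cos)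
    finally have "sin t * ((q (- cos t) - D) / (1 + cos t) * sin t) = (q (- cos t) - D) * (1 - cos t)" .
    then show ?thesis
      by (simp add: algebra_simps)
  qed
  ultimately show ?thesis
    by simp
qed

section \<open>Series for a \<open>C\<^sup>1\<close> function\<close>

context
  fixes T T' :: "real \<Rightarrow> real"
  assumes T'_cont: "continuous_on {-1..1} T'"
    and T_deriv: "\<And>x. x \<in> {-1..1} \<Longrightarrow> (T has_real_derivative T' x) (at x within {-1..1})"
begin

lemma T_cont: "continuous_on {-1..1} T"
  unfolding continuous_on_eq_continuous_within using T_deriv DERIV_continuous by blast

lemma T_deriv_interior: "x \<in> {-1<..<1} \<Longrightarrow> (T has_real_derivative T' x) (at x)"
  using T_deriv[of x] at_within_interior[of x "{-1..1}"] by auto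

lemma continuous_on_T_neg_cos: "continuous_on S (\<lambda>t. T (- cos t))"
  by (intro continuous_on_compose2[OF T_cont] continuous_intros neg_cos_image_subset)

lemma ip_Jm_eq_integral:
  "ip (-1/2) (Jm n) T = (-1) ^ n * (integral {0..pi} (\<lambda>t. T (- cos t) * cos (real n * t))
    - integral {0..pi} (\<lambda>t. T (- cos t) * cos (real (Suc n) * t))) / pi"
proof -
  have "ip (-1/2) (Jm n) T = integral {0..pi} (\<lambda>t. Jm n (- cos t) * T (- cos t) * (1 - cos t)) / pi"
    by (rule ip_minus_half_eq_integral_neg_cos) (intro continuous_intros T_cont)
  also have "(\<lambda>t. Jm n (- cos t) * T (- cos t) * (1 - cos t))
      = (\<lambda>t. (-1) ^ n * (T (- cos t) * cos (real n * t) - T (- cos t) * cos (real (Suc n) * t)))"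
  proof
    fix t
    have "Jm n (- cos t) * T (- cos t) * (1 - cos t) = Jm n (- cos t) * (1 - cos t) * T (- cos t)"
      by (simp only: mult_ac)
    also have "\<dots> = (-1) ^ n * (T (- cos t) * cos (real n * t) - T (- cos t) * cos (real (Suc n) * t))"
      unfolding Jm_neg_cos_mult by (simp add: algebra_simps)
    finally show "Jm n (- cos t) * T (- cos t) * (1 - cos t)
        = (-1) ^ n * (T (- cos t) * cos (real n * t) - T (- cos t) * cos (real (Suc n) * t))" .
  qed
  finally show ?thesis
    by (simp add: integral_diff integrable_continuous_interval continuous_intros continuous_on_T_neg_cos)
qed

lemma ip_Jm_tendsto_0: "(\<lambda>n. ip (-1/2) (Jm n) T) \<longlonglongrightarrow> 0"
proof -
  define I where "I = (\<lambda>n. integral {0..pi} (\<lambda>t. T (- cos t) * cos (real n * t)))"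
  have "(\<lambda>n. integral {0..pi} (\<lambda>t. T (- cos t) * sin (real n * t + pi / 2))) \<longlonglongrightarrow> 0"
  proof (rule integral_mult_sin_tendsto_0)
    show "continuous_on {0..pi} (\<lambda>t. T' (- cos t) * sin t)"
      by (intro continuous_on_compose2[OF T'_cont] continuous_intros neg_cos_image_subset)
    show "((\<lambda>t. T (- cos t)) has_real_derivative T' (- cos t) * sin t) (at t)" if "t \<in> {0<..<pi}" for t
      using that by (auto intro!: derivative_eq_intros DERIV_chain2[OF T_deriv_interior]
          neg_cos_in_open_interval)
  qed (rule continuous_on_T_neg_cos)
  then have "I \<longlonglongrightarrow> 0"
    by (simp add: I_def sin_add)
  then have "(\<lambda>n. norm ((I n - I (Suc n)) / pi)) \<longlonglongrightarrow> 0"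
    unfolding tendsto_norm_zero_iff by (intro tendsto_eq_intros LIMSEQ_Suc) auto
  then have "(\<lambda>n. norm (ip (-1/2) (Jm n) T)) \<longlonglongrightarrow> 0"
    unfolding ip_Jm_eq_integral I_def by (simp add: norm_divide abs_mult power_abs)
  then show ?thesis
    by (rule tendsto_norm_zero_cancel)
qed

lemma ip_half_Jp_eq: "ip (1/2) (Jp m) T = ip (-1/2) (Jm m) T - ip (-1/2) (Jm (Suc m)) T"
  unfolding ip_half_eq_ip_minus_half
proof (rule ip_minus_half_diff)
  show "2 * (1 - x) * Jp m x * T x = Jm m x * T x - Jm (Suc m) x * T x" for x
    by (simp add: Jm_Suc_eq_Jm_add algebra_simps del: Jm.simps)
qed (intro continuous_intros T_cont)+

lemma sums_ip_half_Jp: "(\<lambda>r. ip (1/2) (Jp (r + s)) T) sums ip (-1/2) (Jm s) T"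
  using telescope_sums'[OF LIMSEQ_ignore_initial_segment[OF ip_Jm_tendsto_0, of s]]
  by (simp add: ip_half_Jp_eq)

text \<open>Since \<open>T 1 - T x = slope_at_1 x * (1 - x)\<close>, under \<open>x = - cos t\<close> the factor \<open>1 + cos t\<close>
  combines with the weight into \<open>sin t * sin t\<close>; this is what makes the tails of (3) Fourier
  coefficients of a \<open>C\<^sup>1\<close> function.\<close>

definition slope_at_1 :: "real \<Rightarrow> real" where
  "slope_at_1 x = (if x = 1 then T' 1 else (T 1 - T x) / (1 - x))"

lemma continuous_on_slope_at_1: "continuous_on {-1..1} slope_at_1"
  unfolding slope_at_1_def[abs_def]
  by (rule continuous_on_slope_to_endpoint[OF T_cont T_deriv]) simp

lemma has_real_derivative_sin_mult_slope_at_1: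
  assumes "t \<in> {0<..<pi}"
  shows "((\<lambda>t. sin t * slope_at_1 (- cos t))
      has_real_derivative slope_at_1 (- cos t) - T' (- cos t) * (1 - cos t)) (at t)"
proof (rule has_real_derivative_sin_mult_neg_cos)
  have "- cos t \<in> {-1<..<1}"
    using assms by (rule neg_cos_in_open_interval)
  then show "(slope_at_1 has_real_derivative (slope_at_1 (- cos t) - T' (- cos t)) / (1 + cos t))
      (at (- cos t))"
    using has_real_derivative_slope_to_endpoint[OF T_deriv_interior, of "- cos t" 1 "T' 1"]
    by (simp add: slope_at_1_def[abs_def])
  then show "cos t \<noteq> -1"
    using \<open>- cos t \<in> {-1<..<1}\<close> by auto
qed

lemma ip_Jp_slope_eq_integral:
  "ip (-1/2) (Jp m) (\<lambda>x. T 1 - T x)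
    = (-1) ^ m * integral {0..pi} (\<lambda>t. sin t * slope_at_1 (- cos t) * sin (real (Suc m) * t + 0)) / pi"
proof -
  have "ip (-1/2) (Jp m) (\<lambda>x. T 1 - T x)
      = integral {0..pi} (\<lambda>t. Jp m (- cos t) * (T 1 - T (- cos t)) * (1 - cos t)) / pi"
    by (rule ip_minus_half_eq_integral_neg_cos) (intro continuous_intros T_cont)
  also have "(\<lambda>t. Jp m (- cos t) * (T 1 - T (- cos t)) * (1 - cos t))
      = (\<lambda>t. (-1) ^ m * (sin t * slope_at_1 (- cos t) * sin (real (Suc m) * t + 0)))"
  proof
    fix t
    have slope: "T 1 - T (- cos t) = slope_at_1 (- cos t) * (1 + cos t)"
      by (simp add: slope_at_1_def)
    have "Jp m (- cos t) * (T 1 - T (- cos t)) * (1 - cos t)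
        = slope_at_1 (- cos t) * (Jp m (- cos t) * ((1 + cos t) * (1 - cos t)))"
      unfolding slope by (simp only: mult_ac)
    also have "\<dots> = (-1) ^ m * (sin t * slope_at_1 (- cos t) * sin (real (Suc m) * t + 0))"
      unfolding Jp_neg_cos_mult_sin_sq by (simp add: ac_simps)
    finally show "Jp m (- cos t) * (T 1 - T (- cos t)) * (1 - cos t)
        = (-1) ^ m * (sin t * slope_at_1 (- cos t) * sin (real (Suc m) * t + 0))" .
  qed
  finally show ?thesis
    by simp
qed

lemma ip_Jp_slope_tendsto_0: "(\<lambda>m. ip (-1/2) (Jp m) (\<lambda>x. T 1 - T x)) \<longlonglongrightarrow> 0"
proof -
  have "(\<lambda>m. integral {0..pi} (\<lambda>t. sin t * slope_at_1 (- cos t) * sin (real m * t + 0))) \<longlonglongrightarrow> 0"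
  proof (rule integral_mult_sin_tendsto_0)
    show "continuous_on {0..pi} (\<lambda>t. sin t * slope_at_1 (- cos t))"
      by (intro continuous_intros continuous_on_compose2[OF continuous_on_slope_at_1]
          neg_cos_image_subset)
    show "continuous_on {0..pi} (\<lambda>t. slope_at_1 (- cos t) - T' (- cos t) * (1 - cos t))"
      by (intro continuous_intros continuous_on_compose2[OF continuous_on_slope_at_1]
          continuous_on_compose2[OF T'_cont] neg_cos_image_subset)
  qed (rule has_real_derivative_sin_mult_slope_at_1)
  from tendsto_divide_zero[OF tendsto_rabs_zero[OF LIMSEQ_Suc[OF this]], of pi]
  have "(\<lambda>m. norm (ip (-1/2) (Jp m) (\<lambda>x. T 1 - T x))) \<longlonglongrightarrow> 0"
    unfolding ip_Jp_slope_eq_integral by (simp add: norm_divide abs_mult power_abs)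
  then show ?thesis
    by (rule tendsto_norm_zero_cancel)
qed

lemma ip_Jp_slope_eq: "ip (-1/2) (Jp m) (\<lambda>x. T 1 - T x) = T 1 - ip (-1/2) (Jp m) T"
proof -
  have "ip (-1/2) (Jp m) (\<lambda>x. T 1 - T x) = ip (-1/2) (Jp m) (\<lambda>_. T 1) - ip (-1/2) (Jp m) T"
    by (rule ip_minus_half_diff) (auto intro!: continuous_intros T_cont simp: algebra_simps)
  then show ?thesis
    unfolding ip_Jp_const by simp
qed

lemma ip_Jm_Suc_eq: "ip (-1/2) (Jm (Suc n)) T = ip (-1/2) (Jp (Suc n)) T - ip (-1/2) (Jp n) T"
  by (rule ip_minus_half_diff) (auto intro!: continuous_intros T_cont
      simp: Jm_Suc_eq_Jp_diff left_diff_distrib simp del: Jm.simps Jp.simps)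

lemma sums_ip_minus_half_Jm: "(\<lambda>r. ip (-1/2) (Jm (r + s + 1)) T) sums ip (-1/2) (Jp s) (\<lambda>x. T 1 - T x)"
proof -
  have "(\<lambda>m. T 1 - ip (-1/2) (Jp m) (\<lambda>x. T 1 - T x)) \<longlonglongrightarrow> T 1 - 0"
    by (intro tendsto_diff tendsto_const ip_Jp_slope_tendsto_0)
  then have "(\<lambda>m. ip (-1/2) (Jp m) T) \<longlonglongrightarrow> T 1"
    unfolding ip_Jp_slope_eq by simp
  from telescope_sums[OF LIMSEQ_ignore_initial_segment[OF this, of s]] show ?thesis
    unfolding ip_Jp_slope_eq Suc_eq_plus1[symmetric] ip_Jm_Suc_eq by simp
qed

end

theorem lemma3p1:
  shows "(\<forall>s x. (\<Sum>r\<le>s. Jm r x) = Jp s x)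
    \<and> (\<forall>s x. s \<ge> 1 \<longrightarrow> x \<noteq> 1 \<longrightarrow>
          (\<Sum>r<s. 2 * Jp r x) = (Jm s x - 1) / (x - 1))
    \<and> (\<forall>T s. C1_on_interval T \<longrightarrow>
          (\<lambda>r. ip (-1/2) (Jm (r + s + 1)) T) sums ip (-1/2) (Jp s) (\<lambda>x. T 1 - T x))
    \<and> (\<forall>T s. C1_on_interval T \<longrightarrow>
          (\<lambda>r. ip (1/2) (Jp (r + s)) T) sums ip (-1/2) (Jm s) T)"
proof (intro conjI allI impI)
  fix s x
  show "(\<Sum>r\<le>s. Jm r x) = Jp s x"
    by (rule sum_Jm_eq_Jp)
next
  fix s :: nat and x :: real
  assume "x \<noteq> 1"
  then show "(\<Sum>r<s. 2 * Jp r x) = (Jm s x - 1) / (x - 1)"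
    by (rule sum_Jp_eq_divide)
next
  fix T :: "real \<Rightarrow> real" and s :: nat
  assume "C1_on_interval T"
  then obtain T' where "continuous_on {-1..1} T'"
    and "\<And>x. x \<in> {-1..1} \<Longrightarrow> (T has_real_derivative T' x) (at x within {-1..1})"
    unfolding C1_on_interval_def by blast
  then show "(\<lambda>r. ip (-1/2) (Jm (r + s + 1)) T) sums ip (-1/2) (Jp s) (\<lambda>x. T 1 - T x)"
    by (rule sums_ip_minus_half_Jm)
next
  fix T :: "real \<Rightarrow> real" and s :: nat
  assume "C1_on_interval T"
  then obtain T' where "continuous_on {-1..1} T'"
    and "\<And>x. x \<in> {-1..1} \<Longrightarrow> (T has_real_derivative T' x) (at x within {-1..1})"
    unfolding C1_on_interval_def by blast
  then show "(\<lambda>r. ip (1/2) (Jp (r + s)) T) sums ip (-1/2) (Jm s) T"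
    by (rule sums_ip_half_Jp)
qed

end
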